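(* Let $\Omega=(G,\Lambda,\sigma)$ with $G=(V,E)$ be a feasible instance of the $q$-state Potts model with activity $0\le\beta<1$, let $v\in V\setminus\Lambda$ and $B=B_\Omega(v)$. Let $u_1v_1,\dots,u_mv_m$ be an enumeration of the edges of $G$ with $u_i\in B$, $v_i\notin B$ (different indices may share the same $u_i$ or $v_i$). Let $E(B)=\{uw\in E:u,w\in B\}$ and $\bar B=\{u\in B:\exists w\notin B, uw\in E\}$. Let $G_B$ be the graph with vertex set $(V\setminus B)\cup\bar B$ and edge set $E\setminus E(B)$, and $\Omega_B=(G_B,\Lambda,\sigma)$. For $\pi\in\mathcal{F}(B)$ write $\pi_i=\pi(u_i)$, and for $i=1,\dots,m$ let $\Omega_i^\pi$ be the instance obtained from $\Omega_B$ by fixing (adding to the pinned set) $u_j$ to color $\pi_j$ for every $j<i$, and deleting the edges $u_jv_j$ for every $j\ge i$. Then for every $\pi\in\mathcal{F}(B)$, $$\Pr_\Omega[c(B)=\pi]=\frac{w_{G[B]}(\pi)\prod_{i=1}^m\bigl(1-(1-\beta)\Pr_{\Omega_i^\pi}[c(v_i)=\pi_i]\bigr)}{\sum_{\rho\in\mathcal{F}(B)}w_{G[B]}(\rho)\prod_{i=1}^m\bigl(1-(1-\beta)\Pr_{\Omega_i^\rho}[c(v_i)=\rho_i]\bigr)}.$$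
   Context: Potts model: fix an integer $q\ge2$ and a real $\beta\ge0$; $[q]=\{1,\dots,q\}$, $0^0=1$. For a finite graph $G=(V,E)$, an instance is $\Omega=(G,\Lambda,\sigma)$ with $\Lambda\subseteq V$, $\sigma\in[q]^\Lambda$; $w_\Omega(\pi)=\beta^{|\{uv\in E:\pi(u)=\pi(v)\}|}$ if $\pi\in[q]^V$ agrees with $\sigma$ on $\Lambda$, else $0$. $\Omega$ is feasible if some $\pi$ has $w_\Omega(\pi)>0$; then $\Pr_\Omega[c(V)=\pi]=w_\Omega(\pi)/\sum_{\pi'}w_\Omega(\pi')$ and $\Pr_\Omega[c(S)=\cdot]$, $\Pr_\Omega[c(v)=\cdot]$ are its marginals (if $v\in\Lambda$ this is the point mass at $\sigma(v)$). For $S\subseteq V$ and $\rho\in[q]^S$, $w_{G[S]}(\rho)=\beta^{|\{uw\in E:u,w\in S,\rho(u)=\rho(w)\}|}$. For $S\subseteq V\setminus\Lambda$, $\mathcal{F}(S)$ is the set of feasible $\rho\in[q]^S$, i.e. those for which some $\pi\in[q]^V$ with $w_\Omega(\pi)>0$ agrees with $\rho$ on $S$. A vertex is low-degree if $\deg_G(v)<\frac{q-1}{1-\beta}-2$. $\partial B=\{u\in V\setminus B:\exists w\in B,uw\in E\}$; $B\subseteq V\setminus\Lambda$ is a permissive block in $\Omega$ if every $u\in\partial B\setminus\Lambda$ is low-degree; $B_\Omega(S)$ is the minimal permissive block containing $S$. *)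

theory Defs
  imports Complex_Main "HOL-Library.FuncSet"
begin

(* A finite simple graph is (V, E) with E a set of 2-element subsets of V.  An instance (G, \<Lambda>, \<sigma>) is given by
   V E \<Lambda> \<sigma>, where only the values of \<sigma> on \<Lambda> matter. *)

definition colorings :: "nat \<Rightarrow> 'v set \<Rightarrow> ('v \<Rightarrow> nat) set" where
  "colorings q S = S \<rightarrow>\<^sub>E {1..q}"

definition mono_edges :: "'v set set \<Rightarrow> ('v \<Rightarrow> nat) \<Rightarrow> 'v set set" where
  "mono_edges E \<pi> = {e \<in> E. \<exists>u w. e = {u, w} \<and> u \<noteq> w \<and> \<pi> u = \<pi> w}"

(* w_\<Omega>(\<pi>) ; note 0 ^ 0 = 1 in Isabelle *)
definition potts_weight :: "nat \<Rightarrow> real \<Rightarrow> 'v set \<Rightarrow> 'v set set \<Rightarrow> 'v set \<Rightarrow> ('v \<Rightarrow> nat)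
    \<Rightarrow> ('v \<Rightarrow> nat) \<Rightarrow> real" where
  "potts_weight q \<beta> V E \<Lambda> \<sigma> \<pi> =
     (if \<pi> \<in> colorings q V \<and> (\<forall>x\<in>\<Lambda>. \<pi> x = \<sigma> x)
      then \<beta> ^ card (mono_edges E \<pi>) else 0)"

definition feasible :: "nat \<Rightarrow> real \<Rightarrow> 'v set \<Rightarrow> 'v set set \<Rightarrow> 'v set \<Rightarrow> ('v \<Rightarrow> nat) \<Rightarrow> bool" where
  "feasible q \<beta> V E \<Lambda> \<sigma> = (\<exists>\<pi>\<in>colorings q V. potts_weight q \<beta> V E \<Lambda> \<sigma> \<pi> > 0)"

definition partition_fn :: "nat \<Rightarrow> real \<Rightarrow> 'v set \<Rightarrow> 'v set set \<Rightarrow> 'v set \<Rightarrow> ('v \<Rightarrow> nat) \<Rightarrow> real" where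
  "partition_fn q \<beta> V E \<Lambda> \<sigma> = (\<Sum>\<pi>\<in>colorings q V. potts_weight q \<beta> V E \<Lambda> \<sigma> \<pi>)"

definition prob_set :: "nat \<Rightarrow> real \<Rightarrow> 'v set \<Rightarrow> 'v set set \<Rightarrow> 'v set \<Rightarrow> ('v \<Rightarrow> nat)
    \<Rightarrow> 'v set \<Rightarrow> ('v \<Rightarrow> nat) \<Rightarrow> real" where
  "prob_set q \<beta> V E \<Lambda> \<sigma> S \<rho> =
     (\<Sum>\<pi>\<in>colorings q V. if restrict \<pi> S = \<rho> then potts_weight q \<beta> V E \<Lambda> \<sigma> \<pi> else 0)
       / partition_fn q \<beta> V E \<Lambda> \<sigma>"

definition prob_vertex :: "nat \<Rightarrow> real \<Rightarrow> 'v set \<Rightarrow> 'v set set \<Rightarrow> 'v set \<Rightarrow> ('v \<Rightarrow> nat)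
    \<Rightarrow> 'v \<Rightarrow> nat \<Rightarrow> real" where
  "prob_vertex q \<beta> V E \<Lambda> \<sigma> v a =
     (\<Sum>\<pi>\<in>colorings q V. if \<pi> v = a then potts_weight q \<beta> V E \<Lambda> \<sigma> \<pi> else 0)
       / partition_fn q \<beta> V E \<Lambda> \<sigma>"

definition feasible_set :: "nat \<Rightarrow> real \<Rightarrow> 'v set \<Rightarrow> 'v set set \<Rightarrow> 'v set \<Rightarrow> ('v \<Rightarrow> nat)
    \<Rightarrow> 'v set \<Rightarrow> ('v \<Rightarrow> nat) set" where
  "feasible_set q \<beta> V E \<Lambda> \<sigma> S =
     {\<rho> \<in> colorings q S. \<exists>\<pi>\<in>colorings q V. potts_weight q \<beta> V E \<Lambda> \<sigma> \<pi> > 0 \<and> restrict \<pi> S = \<rho>}"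

definition induced_weight :: "real \<Rightarrow> 'v set set \<Rightarrow> 'v set \<Rightarrow> ('v \<Rightarrow> nat) \<Rightarrow> real" where
  "induced_weight \<beta> E S \<rho> = \<beta> ^ card {e \<in> mono_edges E \<rho>. e \<subseteq> S}"

definition degree :: "'v set set \<Rightarrow> 'v \<Rightarrow> nat" where
  "degree E v = card {e \<in> E. v \<in> e}"

definition low_degree :: "nat \<Rightarrow> real \<Rightarrow> 'v set set \<Rightarrow> 'v \<Rightarrow> bool" where
  "low_degree q \<beta> E v \<longleftrightarrow> real (degree E v) < (real q - 1) / (1 - \<beta>) - 2"

definition boundary :: "'v set set \<Rightarrow> 'v set \<Rightarrow> 'v set" where
  "boundary E B = {u. u \<notin> B \<and> (\<exists>w\<in>B. {u, w} \<in> E)}"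

definition permissive_block :: "nat \<Rightarrow> real \<Rightarrow> 'v set \<Rightarrow> 'v set set \<Rightarrow> 'v set \<Rightarrow> 'v set \<Rightarrow> bool" where
  "permissive_block q \<beta> V E \<Lambda> B \<longleftrightarrow>
     B \<subseteq> V - \<Lambda> \<and> (\<forall>u \<in> boundary E B - \<Lambda>. low_degree q \<beta> E u)"

(* B_\<Omega>(S): the minimal permissive block containing S (permissive blocks are closed
   under intersection, so this is the intersection of all of them containing S) *)
definition min_block :: "nat \<Rightarrow> real \<Rightarrow> 'v set \<Rightarrow> 'v set set \<Rightarrow> 'v set \<Rightarrow> 'v set \<Rightarrow> 'v set" where
  "min_block q \<beta> V E \<Lambda> S = \<Inter>{B. S \<subseteq> B \<and> permissive_block q \<beta> V E \<Lambda> B}"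

definition inner_edges :: "'v set set \<Rightarrow> 'v set \<Rightarrow> 'v set set" where
  "inner_edges E B = {e \<in> E. e \<subseteq> B}"

definition inner_boundary :: "'v set set \<Rightarrow> 'v set \<Rightarrow> 'v set" where
  "inner_boundary E B = {u \<in> B. \<exists>w. w \<notin> B \<and> {u, w} \<in> E}"

definition GB_vertices :: "'v set \<Rightarrow> 'v set set \<Rightarrow> 'v set \<Rightarrow> 'v set" where
  "GB_vertices V E B = (V - B) \<union> inner_boundary E B"

(* edge set of \<Omega>_i^\<pi> (0-based i): E \<setminus> E(B) minus the edges u_j v_j with j \<ge> i *)
definition Omega_i_edges :: "'v set set \<Rightarrow> 'v set \<Rightarrow> ('v \<times> 'v) list \<Rightarrow> nat \<Rightarrow> 'v set set" where
  "Omega_i_edges E B es i =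
     (E - inner_edges E B) - {{fst (es ! j), snd (es ! j)} | j. i \<le> j \<and> j < length es}"

definition Omega_i_pinned :: "'v set \<Rightarrow> ('v \<times> 'v) list \<Rightarrow> nat \<Rightarrow> 'v set" where
  "Omega_i_pinned \<Lambda> es i = \<Lambda> \<union> {fst (es ! j) | j. j < i \<and> j < length es}"

definition Omega_i_pinning :: "'v set \<Rightarrow> ('v \<Rightarrow> nat) \<Rightarrow> ('v \<Rightarrow> nat) \<Rightarrow> ('v \<Rightarrow> nat)" where
  "Omega_i_pinning \<Lambda> \<sigma> \<pi> = (\<lambda>x. if x \<in> \<Lambda> then \<sigma> x else \<pi> x)"

definition block_factor :: "nat \<Rightarrow> real \<Rightarrow> 'v set \<Rightarrow> 'v set set \<Rightarrow> 'v set \<Rightarrow> ('v \<Rightarrow> nat)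
    \<Rightarrow> 'v set \<Rightarrow> ('v \<times> 'v) list \<Rightarrow> ('v \<Rightarrow> nat) \<Rightarrow> real" where
  "block_factor q \<beta> V E \<Lambda> \<sigma> B es \<pi> =
     induced_weight \<beta> E B \<pi> *
     (\<Prod>i<length es. 1 - (1 - \<beta>) *
        prob_vertex q \<beta> (GB_vertices V E B) (Omega_i_edges E B es i)
          (Omega_i_pinned \<Lambda> es i) (Omega_i_pinning \<Lambda> \<sigma> \<pi>)
          (snd (es ! i)) (\<pi> (fst (es ! i))))"

end

theory Submission
  imports Defs
begin

text \<open>Fix a colouring \<open>\<rho>\<close> of \<open>B\<close> and let \<open>U\<close> be the inner boundary of \<open>B\<close>. A colouring of \<open>G\<close>
  extending \<open>\<rho>\<close> has weight \<open>w\<^bsub>G[B]\<^esub>(\<rho>)\<close> times the weight of its restriction in \<open>\<Omega>\<^sub>B\<close> with \<open>U\<close>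
  pinned to \<open>\<rho>\<close>, which is the last instance \<open>\<Omega>\<^sub>i\<^sup>\<rho>\<close>, with no edge deleted. Going from \<open>\<Omega>\<^sub>i\<^sup>\<rho>\<close> to
  \<open>\<Omega>\<^sub>i\<^sub>+\<^sub>1\<^sup>\<rho>\<close> adds the edge \<open>u\<^sub>iv\<^sub>i\<close> and pins \<open>u\<^sub>i\<close>; since \<open>u\<^sub>i\<close> is already pinned or isolated in
  \<open>\<Omega>\<^sub>i\<^sup>\<rho>\<close>, this multiplies the partition function by \<open>1 - (1 - \<beta>) Pr[c(v\<^sub>i) = \<rho>\<^sub>i]\<close> and by a factor
  \<open>1\<close> or \<open>1/q\<close> not depending on \<open>\<rho>\<close>. Telescoping from the first instance, which does not depend
  on \<open>\<rho>\<close> either, \<open>Pr[c(B) = \<rho>]\<close> is proportional to the block factor of \<open>\<rho>\<close>.\<close>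

lemma finite_colorings: "finite S \<Longrightarrow> finite (colorings q S)"
  by (simp add: colorings_def finite_PiE)

lemma potts_weight_nonneg: "\<beta> \<ge> 0 \<Longrightarrow> potts_weight q \<beta> W E' P s c \<ge> 0"
  unfolding potts_weight_def by simp

lemma potts_weight_cong_pinning:
  "\<forall>x\<in>P. s x = s' x \<Longrightarrow> potts_weight q \<beta> W E' P s = potts_weight q \<beta> W E' P s'"
  unfolding potts_weight_def by (intro ext) auto

lemma mono_edges_iff:
  "e \<in> E' \<Longrightarrow> e = {x, y} \<Longrightarrow> x \<noteq> y \<Longrightarrow> e \<in> mono_edges E' c \<longleftrightarrow> c x = c y"
  by (auto simp: mono_edges_def doubleton_eq_iff)

lemma mono_edges_subset: "mono_edges E' c \<subseteq> E'"
  unfolding mono_edges_def by auto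

lemma partition_fn_pos:
  assumes "finite V" "\<beta> \<ge> 0" "feasible q \<beta> V E \<Lambda> \<sigma>"
  shows "partition_fn q \<beta> V E \<Lambda> \<sigma> > 0"
proof -
  obtain c where c: "c \<in> colorings q V" "potts_weight q \<beta> V E \<Lambda> \<sigma> c > 0"
    using assms(3) unfolding feasible_def by auto
  have "potts_weight q \<beta> V E \<Lambda> \<sigma> c \<le> partition_fn q \<beta> V E \<Lambda> \<sigma>"
    unfolding partition_fn_def
    by (rule member_le_sum[OF c(1)]) (use assms finite_colorings potts_weight_nonneg in auto)
  with c(2) show ?thesis by simp
qed

lemma sum_colorings_fixed_value:
  fixes F :: "('v \<Rightarrow> nat) \<Rightarrow> real"
  assumes "x \<in> S" and a: "a \<in> {1..q}"
    and inv: "\<And>c b. c \<in> colorings q S \<Longrightarrow> b \<in> {1..q} \<Longrightarrow> F (c(x := b)) = F c"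
  shows "(\<Sum>c\<in>colorings q S. if c x = a then F c else 0) = (\<Sum>c\<in>colorings q S. F c) / real q"
proof -
  define S' where "S' = S - {x}"
  have "x \<notin> S'" and S: "S = insert x S'" using assms(1) by (auto simp: S'_def)
  have col: "colorings q S = (\<lambda>(b, g). g(x := b)) ` ({1..q} \<times> colorings q S')"
    unfolding colorings_def S by (simp add: PiE_insert_eq)
  have inj: "inj_on (\<lambda>(b, g). g(x := b)) ({1..q} \<times> colorings q S')"
    unfolding colorings_def using inj_combinator[OF \<open>x \<notin> S'\<close>, of "\<lambda>_. {1..q}"] by simp
  have split_sum: "(\<Sum>c\<in>colorings q S. G c) = (\<Sum>b\<in>{1..q}. \<Sum>g\<in>colorings q S'. G (g(x := b)))"
    for G :: "('v \<Rightarrow> nat) \<Rightarrow> real"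
    unfolding col by (subst sum.reindex[OF inj]) (simp add: sum.cartesian_product split_def)
  have F_upd: "F (g(x := b)) = F (g(x := a))" if "g \<in> colorings q S'" "b \<in> {1..q}" for g b
  proof -
    have "g(x := a) \<in> colorings q S" using that a unfolding col by force
    from inv[OF this that(2)] show ?thesis by simp
  qed
  have "(\<Sum>c\<in>colorings q S. if c x = a then F c else 0) = (\<Sum>g\<in>colorings q S'. F (g(x := a)))"
  proof -
    have "(\<Sum>g\<in>colorings q S'. if b = a then F (g(x := b)) else 0) =
        (if b = a then (\<Sum>g\<in>colorings q S'. F (g(x := a))) else 0)" for b
      by simp
    then show ?thesis unfolding split_sum using a by (simp add: sum.delta)
  qed
  moreover have "(\<Sum>c\<in>colorings q S. F c) = real q * (\<Sum>g\<in>colorings q S'. F (g(x := a)))"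
  proof -
    have "(\<Sum>b\<in>{1..q}. \<Sum>g\<in>colorings q S'. F (g(x := b))) =
        (\<Sum>b\<in>{1..q}. \<Sum>g\<in>colorings q S'. F (g(x := a)))"
      by (intro sum.cong refl) (simp add: F_upd)
    then show ?thesis unfolding split_sum by simp
  qed
  moreover have "q > 0" using a by auto
  ultimately show ?thesis by simp
qed

lemma sum_weight_vertex_eq_prob_vertex:
  assumes "finite W" "\<beta> \<ge> 0"
  shows "(\<Sum>c\<in>colorings q W. if c v = a then potts_weight q \<beta> W E' P s c else 0)
       = prob_vertex q \<beta> W E' P s v a * partition_fn q \<beta> W E' P s"
proof (cases "partition_fn q \<beta> W E' P s = 0")
  case True
  then have "\<forall>c\<in>colorings q W. potts_weight q \<beta> W E' P s c = 0"
    using sum_nonneg_eq_0_iff[OF finite_colorings[OF assms(1)], where f = "potts_weight q \<beta> W E' P s"]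
      potts_weight_nonneg[OF assms(2)]
    unfolding partition_fn_def by blast
  then show ?thesis using True by (auto intro!: sum.neutral)
qed (simp add: prob_vertex_def)

lemma potts_weight_insert_edge:
  assumes "finite E'" "{u, v} \<notin> E'" "u \<noteq> v" "s u = a"
  shows "potts_weight q \<beta> W (insert {u, v} E') (insert u P) s c =
    (if c u = a then potts_weight q \<beta> W E' P s c * (if c v = a then \<beta> else 1) else 0)"
proof -
  have mono: "mono_edges (insert {u, v} E') c =
      (if c u = c v then insert {u, v} (mono_edges E' c) else mono_edges E' c)"
    using assms(2,3) unfolding mono_edges_def by (auto simp: doubleton_eq_iff)
  have "finite (mono_edges E' c)" "{u, v} \<notin> mono_edges E' c"
    using assms(1,2) unfolding mono_edges_def by auto
  then show ?thesis unfolding potts_weight_def mono using assms(4) by auto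
qed

lemma potts_weight_recolor_free_vertex:
  assumes "u \<in> W" "u \<notin> P" "\<forall>e\<in>E'. u \<notin> e" "c \<in> colorings q W" "b \<in> {1..q}"
  shows "potts_weight q \<beta> W E' P s (c(u := b)) = potts_weight q \<beta> W E' P s c"
proof -
  have "mono_edges E' (c(u := b)) = mono_edges E' c"
    unfolding mono_edges_def
  proof (intro Collect_cong conj_cong refl)
    fix e assume "e \<in> E'"
    with assms(3) have "u \<notin> e" by blast
    then show "(\<exists>x y. e = {x, y} \<and> x \<noteq> y \<and> (c(u := b)) x = (c(u := b)) y) \<longleftrightarrow>
        (\<exists>x y. e = {x, y} \<and> x \<noteq> y \<and> c x = c y)"
      by auto
  qed
  moreover have "c(u := b) \<in> colorings q W"
    using assms(1,4,5) unfolding colorings_def by (auto simp: PiE_iff extensional_def)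
  moreover have "(\<forall>x\<in>P. (c(u := b)) x = s x) \<longleftrightarrow> (\<forall>x\<in>P. c x = s x)"
    using assms(2) by auto
  ultimately show ?thesis using assms(4) unfolding potts_weight_def by simp
qed

text \<open>If \<open>u\<close> is unpinned and isolated its colour is uniform, whence the factor \<open>1/q\<close>.\<close>

lemma partition_fn_insert_edge:
  assumes W: "finite W" and E': "finite E'" and "u \<in> W" "u \<noteq> v"
    and ne: "{u, v} \<notin> E'" and su: "s u = a" and a: "a \<in> {1..q}" and b: "\<beta> \<ge> 0"
    and pinned_or_isolated: "u \<in> P \<or> (\<forall>e\<in>E'. u \<notin> e)"
  shows "partition_fn q \<beta> W (insert {u, v} E') (insert u P) s =
    (if u \<in> P then 1 else 1 / real q) * partition_fn q \<beta> W E' P s *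
    (1 - (1 - \<beta>) * prob_vertex q \<beta> W E' P s v a)"
proof -
  let ?w = "potts_weight q \<beta> W E' P s"
  let ?Z = "partition_fn q \<beta> W E' P s"
  let ?Su = "\<Sum>c\<in>colorings q W. if c u = a then ?w c else 0"
  let ?Suv = "\<Sum>c\<in>colorings q W. if c u = a then (if c v = a then ?w c else 0) else 0"
  let ?Sv = "\<Sum>c\<in>colorings q W. if c v = a then ?w c else 0"
  have "potts_weight q \<beta> W (insert {u, v} E') (insert u P) s c =
      (if c u = a then ?w c else 0) - (1 - \<beta>) * (if c u = a then (if c v = a then ?w c else 0) else 0)"
    for c unfolding potts_weight_insert_edge[of E' u v s a, OF E' ne \<open>u \<noteq> v\<close> su] by (auto simp: algebra_simps)
  then have Z': "partition_fn q \<beta> W (insert {u, v} E') (insert u P) s = ?Su - (1 - \<beta>) * ?Suv"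
    unfolding partition_fn_def by (simp add: sum_subtractf sum_distrib_left)
  have Sv: "?Sv = prob_vertex q \<beta> W E' P s v a * ?Z"
    by (rule sum_weight_vertex_eq_prob_vertex[OF W b])
  show ?thesis
  proof (cases "u \<in> P")
    case True
    then have "(if c u = a then ?w c else 0) = ?w c"
      and "(if c u = a then (if c v = a then ?w c else 0) else 0) = (if c v = a then ?w c else 0)" for c
      using su unfolding potts_weight_def by auto
    then have "?Su = ?Z" "?Suv = ?Sv" unfolding partition_fn_def by simp_all
    then show ?thesis using True unfolding Z' Sv by (simp add: algebra_simps)
  next
    case False
    note recolor = potts_weight_recolor_free_vertex[OF \<open>u \<in> W\<close> False]
    have "?Su = ?Z / real q"
      unfolding partition_fn_def
      by (rule sum_colorings_fixed_value[OF \<open>u \<in> W\<close> a]) (use recolor pinned_or_isolated False in auto)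
    moreover have "?Suv = ?Sv / real q"
      by (rule sum_colorings_fixed_value[OF \<open>u \<in> W\<close> a])
        (use recolor pinned_or_isolated False \<open>u \<noteq> v\<close> in \<open>auto simp: fun_upd_apply\<close>)
    ultimately show ?thesis using False unfolding Z' Sv
      by (simp add: algebra_simps add_divide_distrib[symmetric])
  qed
qed

definition marginal_weight :: "nat \<Rightarrow> real \<Rightarrow> 'v set \<Rightarrow> 'v set set \<Rightarrow> 'v set \<Rightarrow> ('v \<Rightarrow> nat)
    \<Rightarrow> 'v set \<Rightarrow> ('v \<Rightarrow> nat) \<Rightarrow> real" where
  "marginal_weight q \<beta> V E \<Lambda> \<sigma> S \<rho> =
     (\<Sum>c\<in>colorings q V. if restrict c S = \<rho> then potts_weight q \<beta> V E \<Lambda> \<sigma> c else 0)"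

lemma partition_fn_eq_sum_marginal_weight:
  assumes V: "finite V" and "S \<subseteq> V" and b: "\<beta> \<ge> 0"
  shows "partition_fn q \<beta> V E \<Lambda> \<sigma> =
    (\<Sum>\<rho>\<in>feasible_set q \<beta> V E \<Lambda> \<sigma> S. marginal_weight q \<beta> V E \<Lambda> \<sigma> S \<rho>)"
proof -
  let ?N = "marginal_weight q \<beta> V E \<Lambda> \<sigma> S"
  let ?F = "feasible_set q \<beta> V E \<Lambda> \<sigma> S"
  have fin_S: "finite (colorings q S)" using V \<open>S \<subseteq> V\<close> by (simp add: finite_colorings finite_subset)
  have F_sub: "?F \<subseteq> colorings q S" unfolding feasible_set_def by auto
  have N_infeasible: "?N \<rho> = 0" if "\<rho> \<in> colorings q S - ?F" for \<rho>
    unfolding marginal_weight_def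
  proof (intro sum.neutral ballI)
    fix c assume c: "c \<in> colorings q V"
    show "(if restrict c S = \<rho> then potts_weight q \<beta> V E \<Lambda> \<sigma> c else 0) = 0"
    proof (cases "restrict c S = \<rho>")
      case True
      then have "\<not> potts_weight q \<beta> V E \<Lambda> \<sigma> c > 0"
        using that c unfolding feasible_set_def by auto
      then show ?thesis using potts_weight_nonneg[OF b, of q V E \<Lambda> \<sigma> c] True by simp
    qed simp
  qed
  have "restrict c S \<in> colorings q S" if "c \<in> colorings q V" for c
    using that \<open>S \<subseteq> V\<close> unfolding colorings_def by auto
  then have "partition_fn q \<beta> V E \<Lambda> \<sigma> = (\<Sum>\<rho>\<in>colorings q S. ?N \<rho>)"
    unfolding marginal_weight_def partition_fn_def by (subst sum.swap) (simp add: sum.delta'[OF fin_S])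
  also have "\<dots> = (\<Sum>\<rho>\<in>?F. ?N \<rho>)"
    by (rule sum.mono_neutral_right[OF fin_S F_sub]) (use N_infeasible in auto)
  finally show ?thesis .
qed

lemma prob_set_proportional:
  assumes V: "finite V" and "S \<subseteq> V" and b: "\<beta> \<ge> 0" and feas: "feasible q \<beta> V E \<Lambda> \<sigma>"
    and proportional: "\<And>\<rho>. \<rho> \<in> colorings q S \<Longrightarrow> marginal_weight q \<beta> V E \<Lambda> \<sigma> S \<rho> = K * f \<rho>"
    and \<pi>: "\<pi> \<in> feasible_set q \<beta> V E \<Lambda> \<sigma> S"
  shows "prob_set q \<beta> V E \<Lambda> \<sigma> S \<pi> = f \<pi> / (\<Sum>\<rho>\<in>feasible_set q \<beta> V E \<Lambda> \<sigma> S. f \<rho>)"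
proof -
  let ?F = "feasible_set q \<beta> V E \<Lambda> \<sigma> S"
  have F_sub: "?F \<subseteq> colorings q S" unfolding feasible_set_def by auto
  have Z: "partition_fn q \<beta> V E \<Lambda> \<sigma> = K * (\<Sum>\<rho>\<in>?F. f \<rho>)"
    unfolding partition_fn_eq_sum_marginal_weight[OF V \<open>S \<subseteq> V\<close> b] sum_distrib_left
    using proportional F_sub by (auto intro: sum.cong)
  with partition_fn_pos[OF V b feas] have "K \<noteq> 0" by auto
  have "prob_set q \<beta> V E \<Lambda> \<sigma> S \<pi> = marginal_weight q \<beta> V E \<Lambda> \<sigma> S \<pi> / partition_fn q \<beta> V E \<Lambda> \<sigma>"
    unfolding prob_set_def marginal_weight_def ..
  also have "\<dots> = f \<pi> / (\<Sum>\<rho>\<in>?F. f \<rho>)"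
    unfolding Z proportional[OF subsetD[OF F_sub \<pi>]] using \<open>K \<noteq> 0\<close> by simp
  finally show ?thesis .
qed

lemma min_block_subset:
  assumes "S \<subseteq> V - \<Lambda>" "\<forall>e\<in>E. e \<subseteq> V"
  shows "min_block q \<beta> V E \<Lambda> S \<subseteq> V - \<Lambda>"
proof -
  have "permissive_block q \<beta> V E \<Lambda> (V - \<Lambda>)"
    unfolding permissive_block_def boundary_def using assms(2) by blast
  with assms(1) show ?thesis unfolding min_block_def by blast
qed

locale potts_block =
  fixes V :: "'v set" and E :: "'v set set" and \<Lambda> B :: "'v set"
  assumes finite_V: "finite V"
    and edges: "E \<subseteq> {{x, y} | x y. x \<in> V \<and> y \<in> V \<and> x \<noteq> y}"
    and block_subset: "B \<subseteq> V"
    and block_unpinned: "B \<inter> \<Lambda> = {}"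
begin

lemma edgeE:
  assumes "e \<in> E"
  obtains x y where "e = {x, y}" "x \<in> V" "y \<in> V" "x \<noteq> y"
  using edges assms by blast

lemma finite_E: "finite E"
  by (rule finite_subset[of E "Pow V"]) (auto elim: edgeE simp: finite_V)

lemma GB_vertices_subset: "GB_vertices V E B \<subseteq> V"
  using block_subset unfolding GB_vertices_def inner_boundary_def by auto

lemma block_Un_GB_vertices: "B \<union> GB_vertices V E B = V"
  using block_subset GB_vertices_subset unfolding GB_vertices_def by auto

lemma GB_vertices_Int_block: "GB_vertices V E B \<inter> B = inner_boundary E B"
  unfolding GB_vertices_def inner_boundary_def by auto

lemma outer_edge_subset_GB_vertices:
  assumes "e \<in> E" "\<not> e \<subseteq> B"
  shows "e \<subseteq> GB_vertices V E B"
proof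
  fix z assume "z \<in> e"
  obtain x y where e: "e = {x, y}" "x \<in> V" "y \<in> V" using assms(1) by (rule edgeE)
  show "z \<in> GB_vertices V E B"
  proof (cases "z \<in> B")
    case True
    obtain z' where "e = {z, z'}" using \<open>z \<in> e\<close> e by auto
    with True assms have "z' \<notin> B" "{z, z'} \<in> E" by auto
    with True show ?thesis unfolding GB_vertices_def inner_boundary_def by blast
  next
    case False
    with \<open>z \<in> e\<close> e show ?thesis unfolding GB_vertices_def by auto
  qed
qed

lemma bij_betw_override_on_block:
  assumes \<rho>: "\<rho> \<in> colorings q B"
  shows "bij_betw (\<lambda>d. override_on d \<rho> B)
    {d \<in> colorings q (GB_vertices V E B). \<forall>x\<in>inner_boundary E B. d x = \<rho> x}
    {c \<in> colorings q V. restrict c B = \<rho>}"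
proof (rule bij_betw_byWitness[where f' = "\<lambda>c. restrict c (GB_vertices V E B)"])
  let ?W = "GB_vertices V E B"
  have \<rho>_undef: "\<rho> x = undefined" if "x \<notin> B" for x
    using PiE_arb \<rho> that unfolding colorings_def by metis
  show "\<forall>d\<in>{d \<in> colorings q ?W. \<forall>x\<in>inner_boundary E B. d x = \<rho> x}.
      restrict (override_on d \<rho> B) ?W = d"
  proof (intro ballI ext)
    fix d x assume d: "d \<in> {d \<in> colorings q ?W. \<forall>x\<in>inner_boundary E B. d x = \<rho> x}"
    then have "x \<in> ?W \<Longrightarrow> x \<in> B \<Longrightarrow> d x = \<rho> x" "x \<notin> ?W \<Longrightarrow> d x = undefined"
      using GB_vertices_Int_block PiE_arb unfolding colorings_def by auto
    then show "restrict (override_on d \<rho> B) ?W x = d x" by (simp add: override_on_def)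
  qed
  show "\<forall>c\<in>{c \<in> colorings q V. restrict c B = \<rho>}. override_on (restrict c ?W) \<rho> B = c"
  proof (intro ballI ext)
    fix c x assume c: "c \<in> {c \<in> colorings q V. restrict c B = \<rho>}"
    then have "x \<in> B \<Longrightarrow> \<rho> x = c x" "x \<notin> B \<Longrightarrow> x \<notin> ?W \<Longrightarrow> c x = undefined"
      using block_Un_GB_vertices PiE_arb unfolding colorings_def by fastforce+
    then show "override_on (restrict c ?W) \<rho> B x = c x" by (simp add: override_on_def)
  qed
  show "(\<lambda>d. override_on d \<rho> B) ` {d \<in> colorings q ?W. \<forall>x\<in>inner_boundary E B. d x = \<rho> x}
      \<subseteq> {c \<in> colorings q V. restrict c B = \<rho>}"
  proof (intro image_subsetI CollectI conjI)
    fix d assume "d \<in> {d \<in> colorings q ?W. \<forall>x\<in>inner_boundary E B. d x = \<rho> x}"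
    then have d: "d \<in> ?W \<rightarrow>\<^sub>E {1..q}" unfolding colorings_def by simp
    have "override_on d \<rho> B \<in> (B \<union> ?W) \<rightarrow>\<^sub>E {1..q}"
      using d \<rho> \<rho>_undef unfolding colorings_def by (auto simp: PiE_iff extensional_def override_on_def)
    then show "override_on d \<rho> B \<in> colorings q V"
      unfolding colorings_def block_Un_GB_vertices .
    show "restrict (override_on d \<rho> B) B = \<rho>"
      using \<rho>_undef by (auto simp: override_on_def)
  qed
  show "(\<lambda>c. restrict c ?W) ` {c \<in> colorings q V. restrict c B = \<rho>}
      \<subseteq> {d \<in> colorings q ?W. \<forall>x\<in>inner_boundary E B. d x = \<rho> x}"
  proof (intro image_subsetI CollectI conjI ballI)
    fix c assume c: "c \<in> {c \<in> colorings q V. restrict c B = \<rho>}"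
    then show "restrict c ?W \<in> colorings q ?W"
      using GB_vertices_subset unfolding colorings_def by auto
    fix x assume "x \<in> inner_boundary E B"
    with c GB_vertices_Int_block show "restrict c ?W x = \<rho> x" by auto
  qed
qed

lemma mono_edges_override_on_block:
  assumes d_\<rho>: "\<forall>x\<in>inner_boundary E B. d x = \<rho> x"
  shows "mono_edges E (override_on d \<rho> B) =
    {e \<in> mono_edges E \<rho>. e \<subseteq> B} \<union> mono_edges (E - inner_edges E B) d"
proof (rule set_eqI)
  fix e
  have on_W: "override_on d \<rho> B x = d x" if "x \<in> GB_vertices V E B" for x
    using that d_\<rho> GB_vertices_Int_block by (metis IntI override_on_apply_in override_on_apply_notin)
  show "e \<in> mono_edges E (override_on d \<rho> B) \<longleftrightarrow>
      e \<in> {e \<in> mono_edges E \<rho>. e \<subseteq> B} \<union> mono_edges (E - inner_edges E B) d"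
  proof (cases "e \<in> E")
    case True
    then obtain x y where e: "e = {x, y}" "x \<noteq> y" by (rule edgeE)
    show ?thesis
    proof (cases "e \<subseteq> B")
      case True
      then have "e \<notin> mono_edges (E - inner_edges E B) d"
        using mono_edges_subset unfolding inner_edges_def by blast
      with True show ?thesis using mono_edges_iff[OF \<open>e \<in> E\<close> e] e by auto
    next
      case False
      then have "e \<subseteq> GB_vertices V E B" "e \<in> E - inner_edges E B"
        using outer_edge_subset_GB_vertices \<open>e \<in> E\<close> unfolding inner_edges_def by auto
      with False show ?thesis
        using mono_edges_iff[OF \<open>e \<in> E\<close> e] mono_edges_iff[OF \<open>e \<in> E - inner_edges E B\<close> e] e on_W
        by auto
    qed
  qed (use mono_edges_subset in blast)
qed

lemma potts_weight_override_on_block: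
  assumes \<rho>: "\<rho> \<in> colorings q B" and d: "d \<in> colorings q (GB_vertices V E B)"
    and d_\<rho>: "\<forall>x\<in>inner_boundary E B. d x = \<rho> x"
  shows "potts_weight q \<beta> V E \<Lambda> \<sigma> (override_on d \<rho> B) =
    induced_weight \<beta> E B \<rho> * potts_weight q \<beta> (GB_vertices V E B) (E - inner_edges E B)
      (\<Lambda> \<union> inner_boundary E B) (Omega_i_pinning \<Lambda> \<sigma> \<rho>) d"
proof -
  let ?c = "override_on d \<rho> B"
  have c: "?c \<in> colorings q V"
    using bij_betw_imp_surj_on[OF bij_betw_override_on_block[OF \<rho>]] d d_\<rho> by blast
  have "?c x = d x" if "x \<in> \<Lambda>" for x
    using that block_unpinned by (intro override_on_apply_notin) blast
  then have pinned: "(\<forall>x\<in>\<Lambda>. ?c x = \<sigma> x) \<longleftrightarrow>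
      (\<forall>x\<in>\<Lambda> \<union> inner_boundary E B. d x = Omega_i_pinning \<Lambda> \<sigma> \<rho> x)"
    using d_\<rho> block_unpinned unfolding inner_boundary_def Omega_i_pinning_def by auto
  have "finite (mono_edges E \<rho>)" "finite (mono_edges (E - inner_edges E B) d)"
    using finite_subset[OF mono_edges_subset] finite_E by auto
  moreover have "{e \<in> mono_edges E \<rho>. e \<subseteq> B} \<inter> mono_edges (E - inner_edges E B) d = {}"
    using mono_edges_subset unfolding inner_edges_def by blast
  ultimately have "card (mono_edges E ?c) =
      card {e \<in> mono_edges E \<rho>. e \<subseteq> B} + card (mono_edges (E - inner_edges E B) d)"
    unfolding mono_edges_override_on_block[OF d_\<rho>] by (intro card_Un_disjoint) simp_all
  then show ?thesis
    using c d pinned unfolding potts_weight_def induced_weight_def by (simp add: power_add)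
qed

lemma marginal_weight_block:
  assumes \<rho>: "\<rho> \<in> colorings q B"
  shows "marginal_weight q \<beta> V E \<Lambda> \<sigma> B \<rho> = induced_weight \<beta> E B \<rho> *
    partition_fn q \<beta> (GB_vertices V E B) (E - inner_edges E B) (\<Lambda> \<union> inner_boundary E B)
      (Omega_i_pinning \<Lambda> \<sigma> \<rho>)"
proof -
  let ?W = "GB_vertices V E B"
  let ?w = "potts_weight q \<beta> ?W (E - inner_edges E B) (\<Lambda> \<union> inner_boundary E B) (Omega_i_pinning \<Lambda> \<sigma> \<rho>)"
  let ?D = "{d \<in> colorings q ?W. \<forall>x\<in>inner_boundary E B. d x = \<rho> x}"
  have fin_W: "finite (colorings q ?W)"
    using finite_colorings finite_subset[OF GB_vertices_subset finite_V] by blast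
  have "marginal_weight q \<beta> V E \<Lambda> \<sigma> B \<rho> =
      (\<Sum>c\<in>{c \<in> colorings q V. restrict c B = \<rho>}. potts_weight q \<beta> V E \<Lambda> \<sigma> c)"
    unfolding marginal_weight_def by (simp add: sum.inter_filter finite_colorings finite_V)
  also have "\<dots> = (\<Sum>d\<in>?D. potts_weight q \<beta> V E \<Lambda> \<sigma> (override_on d \<rho> B))"
    by (rule sum.reindex_bij_betw[OF bij_betw_override_on_block[OF \<rho>], symmetric])
  also have "\<dots> = induced_weight \<beta> E B \<rho> * (\<Sum>d\<in>?D. ?w d)"
    unfolding sum_distrib_left by (intro sum.cong refl) (use potts_weight_override_on_block[OF \<rho>] in auto)
  also have "(\<Sum>d\<in>?D. ?w d) = (\<Sum>d\<in>colorings q ?W. ?w d)"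
  proof -
    have "?w d = 0" if "d \<notin> ?D" for d
      using that block_unpinned unfolding potts_weight_def Omega_i_pinning_def inner_boundary_def by auto
    then show ?thesis by (intro sum.mono_neutral_left[OF fin_W]) auto
  qed
  finally show ?thesis unfolding partition_fn_def .
qed

end

locale boundary_edge_list = potts_block +
  fixes es :: "('v \<times> 'v) list"
  assumes distinct_es: "distinct es"
    and set_es: "set es = {(x, y). {x, y} \<in> E \<and> x \<in> B \<and> y \<notin> B}"
begin

lemma nth_es:
  assumes "i < length es"
  shows "{fst (es ! i), snd (es ! i)} \<in> E" "fst (es ! i) \<in> B" "snd (es ! i) \<notin> B"
  using nth_mem[OF assms] unfolding set_es by (auto simp: case_prod_beta)

lemma Omega_i_edges_Suc:
  assumes i: "i < length es"
  shows "Omega_i_edges E B es (Suc i) = insert {fst (es ! i), snd (es ! i)} (Omega_i_edges E B es i)"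
    and "{fst (es ! i), snd (es ! i)} \<notin> Omega_i_edges E B es i"
proof -
  define R where "R i = {{fst (es ! j), snd (es ! j)} | j. i \<le> j \<and> j < length es}" for i
  have R_Suc: "R i = insert {fst (es ! i), snd (es ! i)} (R (Suc i))"
    using i unfolding R_def by (auto simp: le_eq_less_or_eq Suc_le_eq)
  have "{fst (es ! i), snd (es ! i)} \<notin> R (Suc i)"
  proof
    assume "{fst (es ! i), snd (es ! i)} \<in> R (Suc i)"
    then obtain j where j: "i < j" "j < length es" "{fst (es ! i), snd (es ! i)} = {fst (es ! j), snd (es ! j)}"
      unfolding R_def by (auto simp: Suc_le_eq)
    have "es ! i \<noteq> es ! j" using distinct_es i j(1,2) by (simp add: nth_eq_iff_index_eq)
    moreover have "fst (es ! i) \<noteq> snd (es ! j)" using nth_es(2)[OF i] nth_es(3)[OF j(2)] by auto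
    ultimately show False using j(3) by (auto simp: doubleton_eq_iff prod_eq_iff)
  qed
  moreover have "{fst (es ! i), snd (es ! i)} \<in> E - inner_edges E B"
    using nth_es[OF i] unfolding inner_edges_def by auto
  moreover have edges_R: "Omega_i_edges E B es k = (E - inner_edges E B) - R k" for k
    unfolding Omega_i_edges_def R_def ..
  ultimately show "Omega_i_edges E B es (Suc i) = insert {fst (es ! i), snd (es ! i)} (Omega_i_edges E B es i)"
    and "{fst (es ! i), snd (es ! i)} \<notin> Omega_i_edges E B es i"
    unfolding edges_R R_Suc by auto
qed

lemma Omega_i_edges_length: "Omega_i_edges E B es (length es) = E - inner_edges E B"
  unfolding Omega_i_edges_def by auto

lemma Omega_i_pinned_0: "Omega_i_pinned \<Lambda> es 0 = \<Lambda>"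
  unfolding Omega_i_pinned_def by simp

lemma Omega_i_pinned_Suc:
  "i < length es \<Longrightarrow> Omega_i_pinned \<Lambda> es (Suc i) = insert (fst (es ! i)) (Omega_i_pinned \<Lambda> es i)"
  unfolding Omega_i_pinned_def by (auto simp: less_Suc_eq)

lemma Omega_i_pinned_length: "Omega_i_pinned \<Lambda> es (length es) = \<Lambda> \<union> inner_boundary E B"
proof -
  have "{fst (es ! j) | j. j < length es} = fst ` set es"
    by (force simp: set_conv_nth)
  also have "\<dots> = inner_boundary E B"
    unfolding set_es inner_boundary_def by force
  finally show ?thesis unfolding Omega_i_pinned_def by simp
qed

text \<open>An edge at \<open>u\<^sub>i\<close> leaving \<open>B\<close> is some \<open>u\<^sub>kv\<^sub>k\<close>: if \<open>k < i\<close> then \<open>u\<^sub>i\<close> is pinned in \<open>\<Omega>\<^sub>i\<close>,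
  otherwise the edge is deleted from \<open>\<Omega>\<^sub>i\<close>.\<close>

lemma fst_es_pinned_or_isolated:
  assumes i: "i < length es"
  shows "fst (es ! i) \<in> Omega_i_pinned \<Lambda> es i \<or> (\<forall>e\<in>Omega_i_edges E B es i. fst (es ! i) \<notin> e)"
proof -
  have "\<forall>e\<in>Omega_i_edges E B es i. fst (es ! i) \<notin> e"
    if unpinned: "fst (es ! i) \<notin> Omega_i_pinned \<Lambda> es i"
  proof (intro ballI notI)
    fix e assume e: "e \<in> Omega_i_edges E B es i" and "fst (es ! i) \<in> e"
    then have "e \<in> E" "\<not> e \<subseteq> B" unfolding Omega_i_edges_def inner_edges_def by auto
    then obtain y where y: "e = {fst (es ! i), y}"
      using \<open>fst (es ! i) \<in> e\<close> by (auto elim!: edgeE)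
    with \<open>\<not> e \<subseteq> B\<close> nth_es(2)[OF i] have "(fst (es ! i), y) \<in> set es"
      unfolding set_es using \<open>e \<in> E\<close> by auto
    then obtain k where k: "k < length es" "es ! k = (fst (es ! i), y)"
      by (auto simp: in_set_conv_nth)
    show False
    proof (cases "k < i")
      case True
      with k unpinned show False unfolding Omega_i_pinned_def by (metis (mono_tags) UnCI fst_conv mem_Collect_eq)
    next
      case False
      with k y have "e \<in> {{fst (es ! j), snd (es ! j)} | j. i \<le> j \<and> j < length es}"
        by (auto intro!: exI[of _ k])
      with e show False unfolding Omega_i_edges_def by blast
    qed
  qed
  then show ?thesis by blast
qed

lemma partition_fn_Omega_i:
  assumes b: "\<beta> \<ge> 0" and \<rho>: "\<rho> \<in> colorings q B" and "i \<le> length es"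
  shows "partition_fn q \<beta> (GB_vertices V E B) (Omega_i_edges E B es i) (Omega_i_pinned \<Lambda> es i)
      (Omega_i_pinning \<Lambda> \<sigma> \<rho>) =
    partition_fn q \<beta> (GB_vertices V E B) (Omega_i_edges E B es 0) \<Lambda> \<sigma> *
    (\<Prod>j<i. (if fst (es ! j) \<in> Omega_i_pinned \<Lambda> es j then 1 else 1 / real q) *
      (1 - (1 - \<beta>) * prob_vertex q \<beta> (GB_vertices V E B) (Omega_i_edges E B es j)
        (Omega_i_pinned \<Lambda> es j) (Omega_i_pinning \<Lambda> \<sigma> \<rho>) (snd (es ! j)) (\<rho> (fst (es ! j)))))"
  using assms(3)
proof (induction i)
  case 0
  have "potts_weight q \<beta> (GB_vertices V E B) (Omega_i_edges E B es 0) \<Lambda> (Omega_i_pinning \<Lambda> \<sigma> \<rho>) =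
      potts_weight q \<beta> (GB_vertices V E B) (Omega_i_edges E B es 0) \<Lambda> \<sigma>"
    by (rule potts_weight_cong_pinning) (simp add: Omega_i_pinning_def)
  then show ?case unfolding Omega_i_pinned_0 partition_fn_def by simp
next
  case (Suc i)
  then have i: "i < length es" by simp
  have "finite (GB_vertices V E B)" "finite (Omega_i_edges E B es i)"
    using finite_subset[OF GB_vertices_subset finite_V] finite_E unfolding Omega_i_edges_def by auto
  moreover have "fst (es ! i) \<in> GB_vertices V E B"
    using outer_edge_subset_GB_vertices[OF nth_es(1)[OF i]] nth_es(3)[OF i] by blast
  moreover have "fst (es ! i) \<noteq> snd (es ! i)" using nth_es(2,3)[OF i] by auto
  moreover have "Omega_i_pinning \<Lambda> \<sigma> \<rho> (fst (es ! i)) = \<rho> (fst (es ! i))"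
    using nth_es(2)[OF i] block_unpinned unfolding Omega_i_pinning_def by auto
  moreover have "\<rho> (fst (es ! i)) \<in> {1..q}" using \<rho> nth_es(2)[OF i] unfolding colorings_def by auto
  ultimately have "partition_fn q \<beta> (GB_vertices V E B) (Omega_i_edges E B es (Suc i))
      (Omega_i_pinned \<Lambda> es (Suc i)) (Omega_i_pinning \<Lambda> \<sigma> \<rho>) =
    (if fst (es ! i) \<in> Omega_i_pinned \<Lambda> es i then 1 else 1 / real q) *
    partition_fn q \<beta> (GB_vertices V E B) (Omega_i_edges E B es i) (Omega_i_pinned \<Lambda> es i)
      (Omega_i_pinning \<Lambda> \<sigma> \<rho>) *
    (1 - (1 - \<beta>) * prob_vertex q \<beta> (GB_vertices V E B) (Omega_i_edges E B es i)
      (Omega_i_pinned \<Lambda> es i) (Omega_i_pinning \<Lambda> \<sigma> \<rho>) (snd (es ! i)) (\<rho> (fst (es ! i))))"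
    unfolding Omega_i_edges_Suc(1)[OF i] Omega_i_pinned_Suc[OF i]
    using Omega_i_edges_Suc(2)[OF i] b fst_es_pinned_or_isolated[OF i] by (intro partition_fn_insert_edge)
  then show ?case using Suc by (simp add: algebra_simps)
qed

lemma marginal_weight_proportional_block_factor:
  assumes "\<beta> \<ge> 0"
  obtains K where "\<And>\<rho>. \<rho> \<in> colorings q B \<Longrightarrow>
    marginal_weight q \<beta> V E \<Lambda> \<sigma> B \<rho> = K * block_factor q \<beta> V E \<Lambda> \<sigma> B es \<rho>"
proof -
  let ?Z\<^sub>0 = "partition_fn q \<beta> (GB_vertices V E B) (Omega_i_edges E B es 0) \<Lambda> \<sigma>"
  let ?C = "\<Prod>j<length es. if fst (es ! j) \<in> Omega_i_pinned \<Lambda> es j then 1 else 1 / real q"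
  show ?thesis
  proof (rule that[of "?Z\<^sub>0 * ?C"])
    fix \<rho> assume \<rho>: "\<rho> \<in> colorings q B"
    have "marginal_weight q \<beta> V E \<Lambda> \<sigma> B \<rho> = induced_weight \<beta> E B \<rho> *
        partition_fn q \<beta> (GB_vertices V E B) (Omega_i_edges E B es (length es))
          (Omega_i_pinned \<Lambda> es (length es)) (Omega_i_pinning \<Lambda> \<sigma> \<rho>)"
      unfolding Omega_i_edges_length Omega_i_pinned_length by (rule marginal_weight_block[OF \<rho>])
    also have "\<dots> = ?Z\<^sub>0 * ?C * block_factor q \<beta> V E \<Lambda> \<sigma> B es \<rho>"
      unfolding partition_fn_Omega_i[OF assms \<rho> order_refl] block_factor_def prod.distrib
      by (simp only: mult_ac)
    finally show "marginal_weight q \<beta> V E \<Lambda> \<sigma> B \<rho> = ?Z\<^sub>0 * ?C * block_factor q \<beta> V E \<Lambda> \<sigma> B es \<rho>" .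
  qed
qed

end

theorem mainTheorem6:
  fixes q :: nat and \<beta> :: real and V :: "'v set" and E :: "'v set set"
    and \<Lambda> :: "'v set" and \<sigma> :: "'v \<Rightarrow> nat" and v :: 'v and B :: "'v set"
    and es :: "('v \<times> 'v) list" and \<pi> :: "'v \<Rightarrow> nat"
  assumes "q \<ge> 2" and "0 \<le> \<beta>" and "\<beta> < 1"
    and "finite V" and "E \<subseteq> {{x, y} | x y. x \<in> V \<and> y \<in> V \<and> x \<noteq> y}"
    and "\<Lambda> \<subseteq> V" and "\<forall>x\<in>\<Lambda>. \<sigma> x \<in> {1..q}"
    and "feasible q \<beta> V E \<Lambda> \<sigma>"
    and "v \<in> V - \<Lambda>"
    and "B = min_block q \<beta> V E \<Lambda> {v}"
    and "distinct es" and "set es = {(x, y). {x, y} \<in> E \<and> x \<in> B \<and> y \<notin> B}"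
    and "\<pi> \<in> feasible_set q \<beta> V E \<Lambda> \<sigma> B"
  shows "prob_set q \<beta> V E \<Lambda> \<sigma> B \<pi> =
           block_factor q \<beta> V E \<Lambda> \<sigma> B es \<pi> /
           (\<Sum>\<rho>\<in>feasible_set q \<beta> V E \<Lambda> \<sigma> B. block_factor q \<beta> V E \<Lambda> \<sigma> B es \<rho>)"
proof -
  have "B \<subseteq> V - \<Lambda>"
    using min_block_subset[of "{v}" V \<Lambda> E q \<beta>] assms(5,9,10) by blast
  then interpret boundary_edge_list V E \<Lambda> B es
    using assms(4,5,11,12) by unfold_locales auto
  obtain K where "\<And>\<rho>. \<rho> \<in> colorings q B \<Longrightarrow>
      marginal_weight q \<beta> V E \<Lambda> \<sigma> B \<rho> = K * block_factor q \<beta> V E \<Lambda> \<sigma> B es \<rho>"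
    using marginal_weight_proportional_block_factor[OF assms(2)] by blast
  then show ?thesis
    using prob_set_proportional[OF assms(4) block_subset assms(2,8) _ assms(13)] by blast
qed

end
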